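(* Let $u^m\in\mathbb{P}^{\mathrm{disc}}_0(\mathcal{T}_h)$ and $v^m\in\mathbb{P}^{\mathrm{cont}}_1(\mathcal{T}_h)$ be given with $u^m\ge 0$ in $\Omega$ and, in the case $\tau>0$, $v^m\ge 0$ in $\Omega$. Then any solution $(v^{m+1},u^{m+1},\mu_\varepsilon^{m+1})$ of the fully discrete scheme (Step 1 and Step 2 described in the context) satisfies $u^{m+1}\ge 0$ and $v^{m+1}\ge 0$ in $\Omega$.
   Context: Let $\Omega\subset\mathbb{R}^2$ be a bounded polygonal domain and $\mathcal{T}_h$ a shape-regular triangular mesh of $\overline\Omega$ of size $h$. $\mathcal{E}_h^i$ denotes the set of interior edges. For an interior edge $e=\partial K\cap\partial L$ the two adjacent triangles are labelled $K,L$ so that the unit normal $\mathbf{n}_e$ points from $K$ to $L$; for a function $w$, $w_K,w_L$ are its traces from $K$ and $L$ and the jump is $[\![w]\!]=w_K-w_L$. $C_K$ denotes the barycenter of $K$, and $\mathcal{D}_e=|C_K-C_L|$ for $e=K\cap L\in\mathcal{E}_h^i$. The mesh is assumed to satisfy: (H1) for every interior edge $e=K\cap L$, the segment joining $C_K$ and $C_L$ is orthogonal to $e$; (H2) every angle of every triangle of $\mathcal{T}_h$ is at most $\pi/2$. $\mathbb{P}^{\mathrm{disc}}_0(\mathcal{T}_h)$ is the space of piecewise constant functions on $\mathcal{T}_h$, $\mathbb{P}^{\mathrm{cont}}_1(\mathcal{T}_h)$ the space of continuous piecewise linear functions, and $\Pi_0$ the $L^2(\Omega)$-orthogonal projection onto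 $\mathbb{P}^{\mathrm{disc}}_0(\mathcal{T}_h)$. For a scalar $w$, $w_\oplus=\max\{w,0\}$, $w_\ominus=-\min\{w,0\}$. $(\cdot,\cdot)$ is the $L^2(\Omega)$ inner product and $(f,g)_h=\int_\Omega I_h(fg)$ the mass-lumped inner product, $I_h$ being the nodal $\mathbb{P}_1$ interpolant. The upwind form is $$a^{upw}_h(\mu;u,\bar u)=\int_\Omega(\nabla\mu\cdot\nabla\bar u)\,u+\sum_{e\in\mathcal{E}_h^i,\,e=K\cap L}\frac{1}{\mathcal{D}_e}\int_e\Big(([\![\Pi_0\mu]\!])_\oplus u_K-([\![\Pi_0\mu]\!])_\ominus u_L\Big)[\![\bar u]\!].$$ Parameters: $k_0,\dots,k_4>0$, $\tau\in\{0,1\}$, time step $\Delta t>0$, $\varepsilon>0$; $\delta_t w^{m+1}=(w^{m+1}-w^m)/\Delta t$. The scheme: Step 1: find $v^{m+1}\in\mathbb{P}^{\mathrm{cont}}_1(\mathcal{T}_h)$ with $\tau(\delta_t v^{m+1},\bar v)_h+k_2(\nabla v^{m+1},\nabla\bar v)+k_3(v^{m+1},\bar v)_h-k_4(u^m,\bar v)=0$ for all $\bar v\in\mathbb{P}^{\mathrm{cont}}_1(\mathcal{T}_h)$. Step 2: find $(u^{m+1},\mu_\varepsilon^{m+1})\in\mathbb{P}^{\mathrm{disc}}_0(\mathcal{T}_h)^2$ with $u^{m+1}+\varepsilon>0$ such that $(\delta_t u^{m+1},\bar u)+a^{upw}_h(\mu_\varepsilon^{m+1};(u^{m+1})_\oplus,\bar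 u)=0$ and $(\mu_\varepsilon^{m+1},\bar\mu)-k_0(\log(u^{m+1}+\varepsilon),\bar\mu)+k_1(v^{m+1},\bar\mu)=0$ for all $\bar u,\bar\mu\in\mathbb{P}^{\mathrm{disc}}_0(\mathcal{T}_h)$. *)

theory Defs
  imports "HOL-Analysis.Analysis"
begin

type_synonym point = "real^2"

text \<open>Triangles are represented by their vertex sets.\<close>
definition is_triangle :: "point set \<Rightarrow> bool" where
  "is_triangle K \<longleftrightarrow> card K = 3 \<and> \<not> affine_dependent K"

definition conforming_mesh :: "point set set \<Rightarrow> point set \<Rightarrow> bool" where
  "conforming_mesh T \<Omega> \<longleftrightarrow>
     open \<Omega> \<and> connected \<Omega> \<and> bounded \<Omega> \<and> \<Omega> \<noteq> {} \<and>
     finite T \<and> (\<forall>K\<in>T. is_triangle K) \<and>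
     closure \<Omega> = (\<Union>K\<in>T. convex hull K) \<and>
     (\<forall>K\<in>T. \<forall>L\<in>T. K \<noteq> L \<longrightarrow> convex hull K \<inter> convex hull L = convex hull (K \<inter> L))"

definition area :: "point set \<Rightarrow> real" where
  "area K = measure lebesgue (convex hull K)"

definition barycenter :: "point set \<Rightarrow> point" where
  "barycenter K = (1 / real (card K)) *\<^sub>R (\<Sum>p\<in>K. p)"

text \<open>Interior edges, as ordered pairs (K,L) of distinct triangles sharing an edge K \<inter> L.
  Each interior edge appears twice (as (K,L) and (L,K)).\<close>
definition interior_edge_pairs :: "point set set \<Rightarrow> (point set \<times> point set) set" where
  "interior_edge_pairs T = {(K, L). K \<in> T \<and> L \<in> T \<and> K \<noteq> L \<and> card (K \<inter> L) = 2}"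

definition edge_length :: "point set \<Rightarrow> point set \<Rightarrow> real" where
  "edge_length K L = diameter (K \<inter> L)"

definition D_edge :: "point set \<Rightarrow> point set \<Rightarrow> real" where
  "D_edge K L = dist (barycenter K) (barycenter L)"

definition vangle :: "point \<Rightarrow> point \<Rightarrow> real" where
  "vangle u v = arccos ((u \<bullet> v) / (norm u * norm v))"

definition H1 :: "point set set \<Rightarrow> bool" where
  "H1 T \<longleftrightarrow> (\<forall>(K, L) \<in> interior_edge_pairs T. \<forall>p\<in>K \<inter> L. \<forall>q\<in>K \<inter> L.
       (barycenter K - barycenter L) \<bullet> (p - q) = 0)"

definition H2 :: "point set set \<Rightarrow> bool" where
  "H2 T \<longleftrightarrow> (\<forall>K\<in>T. \<forall>p\<in>K. \<forall>q\<in>K. \<forall>r\<in>K.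
       p \<noteq> q \<and> p \<noteq> r \<and> q \<noteq> r \<longrightarrow> vangle (q - p) (r - p) \<le> pi / 2)"

text \<open>Piecewise constants P0^disc are functions on the triangles (T-indexed values).
  Continuous piecewise linears P1^cont: functions on the plane that are affine on each
  closed triangle (continuity across edges is then automatic).\<close>
definition P1cont :: "point set set \<Rightarrow> (point \<Rightarrow> real) \<Rightarrow> bool" where
  "P1cont T v \<longleftrightarrow> (\<forall>K\<in>T. \<exists>a c. \<forall>x\<in>convex hull K. v x = a \<bullet> x + c)"

definition grad_on :: "point set \<Rightarrow> (point \<Rightarrow> real) \<Rightarrow> point" where
  "grad_on K v = (THE a. \<exists>c. \<forall>x\<in>convex hull K. v x = a \<bullet> x + c)"

definition posp :: "real \<Rightarrow> real" where "posp w = max w 0"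
definition negp :: "real \<Rightarrow> real" where "negp w = - min w 0"

definition L2_00 :: "point set set \<Rightarrow> (point set \<Rightarrow> real) \<Rightarrow> (point set \<Rightarrow> real) \<Rightarrow> real" where
  "L2_00 T u w = (\<Sum>K\<in>T. area K * u K * w K)"

definition L2_01 :: "point set set \<Rightarrow> (point set \<Rightarrow> real) \<Rightarrow> (point \<Rightarrow> real) \<Rightarrow> real" where
  "L2_01 T u v = (\<Sum>K\<in>T. u K * integral (convex hull K) v)"

definition stiff :: "point set set \<Rightarrow> (point \<Rightarrow> real) \<Rightarrow> (point \<Rightarrow> real) \<Rightarrow> real" where
  "stiff T v w = (\<Sum>K\<in>T. area K * (grad_on K v \<bullet> grad_on K w))"

text \<open>Mass-lumped product (f,g)_h = \<integral> I_h(fg), computed elementwise: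
  the P1 interpolant integrates over K to |K|/3 times the sum of its vertex values.\<close>
definition lumped :: "point set set \<Rightarrow> (point \<Rightarrow> real) \<Rightarrow> (point \<Rightarrow> real) \<Rightarrow> real" where
  "lumped T f g = (\<Sum>K\<in>T. area K / 3 * (\<Sum>p\<in>K. f p * g p))"

text \<open>The volume term
  \<integral>(\<nabla>mu\<cdot>\<nabla>ubar)u vanishes (elementwise gradients of P0 functions are zero) and
  Pi_0 mu = mu. Each interior edge is counted twice (once per orientation), whence
  the factor 1/2; the summand is invariant under swapping K and L.\<close>
definition a_upw :: "point set set \<Rightarrow> (point set \<Rightarrow> real) \<Rightarrow> (point set \<Rightarrow> real)
                      \<Rightarrow> (point set \<Rightarrow> real) \<Rightarrow> real" where
  "a_upw T \<mu> u ub = (\<Sum>(K, L)\<in>interior_edge_pairs T.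
      1 / 2 * (edge_length K L / D_edge K L) *
      (posp (\<mu> K - \<mu> L) * u K - negp (\<mu> K - \<mu> L) * u L) * (ub K - ub L))"

end

theory Submission
  imports Defs
begin

(*
  Nonnegativity of u: test the u-equation of Step 2 with the negative part of u^(m+1).
  The upwind flux across an edge carries only positive parts of u^(m+1), and these are
  orthogonal to negative parts, so the upwind term is nonpositive. Since u^m >= 0, the
  time-difference term is at most -(1/Delta t) sum_K |K| ((u^(m+1)_K)_-)^2, so the negative
  part vanishes.

  Nonnegativity of v: a discrete minimum principle. Test Step 1 with the hat function of a
  vertex p at which v^(m+1) is minimal. Mass lumping localises both mass terms at p, the
  source term is nonnegative, and the stiffness term is nonpositive: on a non-obtuse triangle
  the gradients of two distinct barycentric coordinates are the dual basis of two edge vectors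
  meeting at a non-obtuse angle, hence have nonpositive inner product, and at a minimum this
  gives grad v . grad lambda_p <= 0. So v^(m+1)(p) >= 0, and on every triangle v^(m+1) is a
  convex combination of nonnegative vertex values.
*)

section \<open>Affine functionals\<close>

lemma affine_functional_eq_on_interior:
  fixes a a' :: "'a::real_inner"
  assumes "interior S \<noteq> {}" and eq: "\<forall>x\<in>S. a \<bullet> x + c = a' \<bullet> x + c'"
  shows "a = a'"
proof (rule ccontr)
  assume "a \<noteq> a'"
  define d where "d = a - a'"
  then have d: "norm d > 0" using \<open>a \<noteq> a'\<close> by simp
  obtain z r where "r > 0" "ball z r \<subseteq> S"
    using assms(1) mem_interior by blast
  define t where "t = r / (2 * norm d)"
  have "t > 0" using d \<open>r > 0\<close> by (simp add: t_def)
  have "dist z (z + t *\<^sub>R d) < r"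
    using d \<open>r > 0\<close> by (simp add: t_def dist_norm)
  then have "z \<in> S" "z + t *\<^sub>R d \<in> S"
    using \<open>r > 0\<close> \<open>ball z r \<subseteq> S\<close> by auto
  then have "a \<bullet> (z + t *\<^sub>R d) + c = a' \<bullet> (z + t *\<^sub>R d) + c'" "a \<bullet> z + c = a' \<bullet> z + c'"
    using eq by auto
  then have "d \<bullet> (z + t *\<^sub>R d) = d \<bullet> z"
    unfolding d_def by (simp add: inner_diff_left algebra_simps)
  then have "t * (d \<bullet> d) = 0" by (simp add: inner_add_right)
  with \<open>t > 0\<close> d show False by simp
qed

lemma affine_functional_eq:
  fixes a a' :: "'a::real_inner"
  assumes "\<And>x. a \<bullet> x + c = a' \<bullet> x + c'"
  shows "a = a'"
  using affine_functional_eq_on_interior[of UNIV a c a' c'] assms by simp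

lemma measure_pos_if_interior_nonempty:
  fixes C :: "'a::euclidean_space set"
  assumes "compact C" and "interior C \<noteq> {}"
  shows "measure lebesgue C > 0"
proof -
  obtain z r where "r > 0" "ball z r \<subseteq> C"
    using assms(2) mem_interior by blast
  have "0 < Henstock_Kurzweil_Integration.content (ball z r)" using content_ball_pos[OF \<open>r > 0\<close>] .
  also have "\<dots> \<le> measure lborel C"
    by (rule measure_mono_fmeasurable[OF \<open>ball z r \<subseteq> C\<close>])
       (auto simp: fmeasurable_compact assms(1))
  also have "\<dots> = measure lebesgue C"
    using assms(1) by (simp add: compact_imp_closed borel_closed)
  finally show ?thesis .
qed

lemma affine_nonneg_on_convex_body:
  fixes C \<Omega> :: "'a::euclidean_space set"
  assumes "convex C" "closed C" "interior C \<noteq> {}" "C \<subseteq> closure \<Omega>"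
    and nonneg: "\<forall>x\<in>C \<inter> \<Omega>. a \<bullet> x + c \<ge> 0"
  shows "\<forall>x\<in>C. a \<bullet> x + c \<ge> 0"
proof -
  have "interior C \<subseteq> closure (interior C \<inter> \<Omega>)"
    using open_Int_closure_subset[OF open_interior, of C \<Omega>] assms(4) interior_subset by blast
  then have "closure (interior C) \<subseteq> closure (interior C \<inter> \<Omega>)"
    by (simp add: closure_minimal)
  moreover have "C = closure (interior C)"
    using convex_closure_interior[OF assms(1,3)] closure_closed[OF assms(2)] by simp
  moreover have "closure (interior C \<inter> \<Omega>) \<subseteq> {x. a \<bullet> x + c \<ge> 0}"
    using nonneg interior_subset
    by (intro closure_minimal closed_Collect_le continuous_intros) auto
  ultimately show ?thesis by blast
qed

section \<open>Barycentric coordinates\<close>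

locale full_simplex =
  fixes S :: "'a::euclidean_space set"
  assumes finite_vertices: "finite S"
    and affine_independent: "\<not> affine_dependent S"
    and affine_hull_UNIV: "affine hull S = UNIV"
begin

definition barycentric :: "'a \<Rightarrow> 'a \<Rightarrow> real" where
  "barycentric p x = (SOME w. sum w S = 1 \<and> (\<Sum>q\<in>S. w q *\<^sub>R q) = x) p"

lemma barycentric_coordinates:
  shows barycentric_sum: "(\<Sum>q\<in>S. barycentric q x) = 1"
    and barycentric_combination: "(\<Sum>q\<in>S. barycentric q x *\<^sub>R q) = x"
proof -
  have "\<exists>w. sum w S = 1 \<and> (\<Sum>q\<in>S. w q *\<^sub>R q) = x"
    using affine_hull_finite[OF finite_vertices] affine_hull_UNIV by blast
  from someI_ex[OF this] show "(\<Sum>q\<in>S. barycentric q x) = 1" "(\<Sum>q\<in>S. barycentric q x *\<^sub>R q) = x"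
    unfolding barycentric_def by auto
qed

lemma barycentric_unique:
  assumes "sum w S = 1" "(\<Sum>q\<in>S. w q *\<^sub>R q) = x" and "p \<in> S"
  shows "barycentric p x = w p"
proof -
  define d where "d q = barycentric q x - w q" for q
  have "sum d S = 0" "(\<Sum>q\<in>S. d q *\<^sub>R q) = 0"
    using assms(1,2) barycentric_coordinates[of x]
    by (simp_all add: d_def sum_subtractf scaleR_diff_left)
  then have "\<forall>q\<in>S. d q = 0"
    using affine_independent affine_dependent_explicit_finite[OF finite_vertices] by blast
  with \<open>p \<in> S\<close> show ?thesis by (simp add: d_def)
qed

lemma barycentric_face:
  assumes "F \<subseteq> S" "sum w F = 1" "(\<Sum>q\<in>F. w q *\<^sub>R q) = x" and "p \<in> S"
  shows "barycentric p x = (if p \<in> F then w p else 0)"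
proof (rule barycentric_unique[OF _ _ \<open>p \<in> S\<close>])
  have "S \<inter> F = F" using assms(1) by blast
  then show "(\<Sum>q\<in>S. if q \<in> F then w q else 0) = 1"
    using assms(2) by (simp add: sum.inter_restrict[OF finite_vertices, symmetric])
  have "(\<Sum>q\<in>S. (if q \<in> F then w q else 0) *\<^sub>R q) = (\<Sum>q\<in>S \<inter> F. w q *\<^sub>R q)"
    by (simp add: sum.inter_restrict[OF finite_vertices] if_distrib[of "\<lambda>t. t *\<^sub>R _"] cong: if_cong)
  with \<open>S \<inter> F = F\<close> assms(3) show "(\<Sum>q\<in>S. (if q \<in> F then w q else 0) *\<^sub>R q) = x"
    by simp
qed

lemma barycentric_vertex:
  assumes "p \<in> S" "q \<in> S"
  shows "barycentric p q = (if p = q then 1 else 0)"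
  using barycentric_face[of "{q}" "\<lambda>_. 1" q p] assms by auto

lemma barycentric_nonneg:
  assumes "p \<in> S" "x \<in> convex hull S"
  shows "barycentric p x \<ge> 0"
proof -
  obtain w where "\<forall>q\<in>S. 0 \<le> w q" "sum w S = 1" "(\<Sum>q\<in>S. w q *\<^sub>R q) = x"
    using assms(2) convex_hull_finite[OF finite_vertices] by blast
  with assms(1) show ?thesis using barycentric_unique by simp
qed

lemma linear_barycentric:
  assumes "p \<in> S"
  shows "linear (\<lambda>x. barycentric p x - barycentric p 0)"
proof (rule linearI)
  fix x y :: 'a and c :: real
  have "barycentric p (x + y) = barycentric p x + barycentric p y - barycentric p 0"
    by (rule barycentric_unique[OF _ _ assms])
       (simp_all add: sum.distrib sum_subtractf scaleR_add_left scaleR_diff_left barycentric_coordinates)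
  then show "barycentric p (x + y) - barycentric p 0
      = (barycentric p x - barycentric p 0) + (barycentric p y - barycentric p 0)"
    by simp
  have "(\<Sum>q\<in>S. (c * barycentric q x + (1 - c) * barycentric q 0) *\<^sub>R q)
      = c *\<^sub>R (\<Sum>q\<in>S. barycentric q x *\<^sub>R q) + (1 - c) *\<^sub>R (\<Sum>q\<in>S. barycentric q 0 *\<^sub>R q)"
    by (simp add: scaleR_add_left sum.distrib scaleR_sum_right)
  then have "barycentric p (c *\<^sub>R x) = c * barycentric p x + (1 - c) * barycentric p 0"
    by (intro barycentric_unique[OF _ _ assms])
       (simp_all add: sum.distrib sum_distrib_left[symmetric] barycentric_coordinates)
  then show "barycentric p (c *\<^sub>R x) - barycentric p 0 = c *\<^sub>R (barycentric p x - barycentric p 0)"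
    by (simp add: algebra_simps)
qed

(* For a linear functional f, adjoint f 1 is the vector g with f x = g \<bullet> x. *)
definition barycentric_grad :: "'a \<Rightarrow> 'a" where
  "barycentric_grad p = adjoint (\<lambda>x. barycentric p x - barycentric p 0) 1"

lemma barycentric_affine:
  assumes "p \<in> S"
  shows "barycentric p x = barycentric_grad p \<bullet> x + barycentric p 0"
  using adjoint_clauses(2)[OF linear_barycentric[OF assms], of 1 x]
  by (simp add: barycentric_grad_def)

lemma barycentric_grad_sum: "(\<Sum>q\<in>S. barycentric_grad q) = 0"
proof -
  have "(\<Sum>q\<in>S. barycentric_grad q) \<bullet> x + (\<Sum>q\<in>S. barycentric q 0) = 0 \<bullet> x + 1" for x
    using barycentric_sum[of x] barycentric_affine[of _ x]
    by (simp add: inner_sum_left sum.distrib[symmetric])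
  then show ?thesis
    by (rule affine_functional_eq)
qed

lemma barycentric_grad_expansion: "b = (\<Sum>q\<in>S. (b \<bullet> q) *\<^sub>R barycentric_grad q)"
proof -
  have "b \<bullet> x + 0 = (\<Sum>q\<in>S. (b \<bullet> q) *\<^sub>R barycentric_grad q) \<bullet> x + (\<Sum>q\<in>S. (b \<bullet> q) * barycentric q 0)"
    for x
  proof -
    have "b \<bullet> x = b \<bullet> (\<Sum>q\<in>S. barycentric q x *\<^sub>R q)"
      by (simp only: barycentric_combination)
    also have "\<dots> = (\<Sum>q\<in>S. (b \<bullet> q) * (barycentric_grad q \<bullet> x) + (b \<bullet> q) * barycentric q 0)"
      unfolding inner_sum_right
      by (intro sum.cong refl) (simp add: barycentric_affine[of _ x] algebra_simps)
    finally show ?thesis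
      by (simp add: sum.distrib inner_sum_left)
  qed
  then show ?thesis
    by (rule affine_functional_eq)
qed

lemma inner_barycentric_grad_nonpos_at_min:
  assumes "p \<in> S" and min: "\<forall>q\<in>S. b \<bullet> p \<le> b \<bullet> q"
    and acute: "\<forall>q\<in>S. q \<noteq> p \<longrightarrow> barycentric_grad q \<bullet> barycentric_grad p \<le> 0"
  shows "b \<bullet> barycentric_grad p \<le> 0"
proof -
  have "b \<bullet> barycentric_grad p = (\<Sum>q\<in>S. (b \<bullet> q) * (barycentric_grad q \<bullet> barycentric_grad p))"
    by (subst (1) barycentric_grad_expansion[of b]) (simp add: inner_sum_left)
  also have "\<dots> = (\<Sum>q\<in>S. (b \<bullet> q - b \<bullet> p) * (barycentric_grad q \<bullet> barycentric_grad p))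
      + (b \<bullet> p) * ((\<Sum>q\<in>S. barycentric_grad q) \<bullet> barycentric_grad p)"
    by (simp add: inner_sum_left sum_distrib_left sum_subtractf algebra_simps)
  also have "\<dots> = (\<Sum>q\<in>S. (b \<bullet> q - b \<bullet> p) * (barycentric_grad q \<bullet> barycentric_grad p))"
    by (simp add: barycentric_grad_sum)
  also have "\<dots> \<le> 0"
  proof (rule sum_nonpos)
    fix q assume "q \<in> S"
    with min acute show "(b \<bullet> q - b \<bullet> p) * (barycentric_grad q \<bullet> barycentric_grad p) \<le> 0"
      by (cases "q = p") (auto intro: mult_nonneg_nonpos)
  qed
  finally show ?thesis .
qed

lemma interior_convex_hull_nonempty: "interior (convex hull S) \<noteq> {}"
proof -
  have "int (card S) = aff_dim S + 1"
    using aff_dim_affine_independent[OF affine_independent] .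
  also have "aff_dim S = DIM('a)"
    using aff_dim_affine_hull[of S] affine_hull_UNIV by simp
  finally have "card S = Suc DIM('a)" by simp
  then show ?thesis
    using interior_convex_hull_eq_empty affine_independent by blast
qed

lemma affine_interpolation:
  assumes f: "\<forall>x\<in>convex hull S. f x = b \<bullet> x + c" and "x \<in> convex hull S"
  shows "f x = (\<Sum>q\<in>S. barycentric q x * f q)"
proof -
  have "(\<Sum>q\<in>S. barycentric q x * f q) = (\<Sum>q\<in>S. barycentric q x * (b \<bullet> q) + barycentric q x * c)"
    using f hull_subset[of S convex] by (intro sum.cong) (auto simp: algebra_simps)
  also have "\<dots> = b \<bullet> x + c"
    by (subst (3) barycentric_combination[of x, symmetric])
       (simp add: sum.distrib inner_sum_right sum_distrib_right[symmetric] barycentric_sum)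
  finally show ?thesis using f \<open>x \<in> convex hull S\<close> by simp
qed

end

section \<open>Non-obtuse triangles\<close>

lemma inner_real2: "(x::real^2) \<bullet> y = x$1 * y$1 + x$2 * y$2"
  by (simp add: inner_vec_def sum_2)

lemma dual_basis_inner_nonpos:
  fixes a b u w :: "real^2"
  assumes "a \<bullet> u = 1" "a \<bullet> w = 0" "b \<bullet> u = 0" "b \<bullet> w = 1" and "u \<bullet> w \<ge> 0"
  shows "a \<bullet> b \<le> 0"
proof -
  define D where "D = u$1 * w$2 - u$2 * w$1"
  \<comment> \<open>Cramer's rule: a = (w2, -w1) / D and b = (-u2, u1) / D, so D^2 (a \<bullet> b) = - (u \<bullet> w).\<close>
  have a: "D * a$1 = w$2" "D * a$2 = - w$1" and b: "D * b$1 = - u$2" "D * b$2 = u$1"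
    using assms(1-4) unfolding inner_real2 D_def by algebra+
  have "D \<noteq> 0"
  proof
    assume "D = 0"
    with a have "w = 0" by (simp add: vec_eq_iff forall_2)
    with \<open>b \<bullet> w = 1\<close> show False by simp
  qed
  have "D\<^sup>2 * (a \<bullet> b) = (D * a$1) * (D * b$1) + (D * a$2) * (D * b$2)"
    unfolding inner_real2 by algebra
  also have "\<dots> = - (u \<bullet> w)"
    unfolding a b inner_real2 by (simp add: algebra_simps)
  finally have "D\<^sup>2 * (a \<bullet> b) \<le> 0" using \<open>u \<bullet> w \<ge> 0\<close> by simp
  with \<open>D \<noteq> 0\<close> show ?thesis by (simp add: mult_le_0_iff)
qed

lemma inner_nonneg_if_vangle_le_pi_half:
  assumes "vangle u w \<le> pi / 2"
  shows "u \<bullet> w \<ge> 0"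
proof (rule ccontr)
  assume "\<not> u \<bullet> w \<ge> 0"
  then have "u \<noteq> 0" "w \<noteq> 0" by auto
  then have norms: "norm u * norm w > 0" by simp
  define t where "t = (u \<bullet> w) / (norm u * norm w)"
  have "t < 0" unfolding t_def using \<open>\<not> u \<bullet> w \<ge> 0\<close> norms by (simp add: divide_neg_pos)
  moreover have "-1 \<le> t"
    using Cauchy_Schwarz_ineq2[of u w] norms by (simp add: t_def field_simps abs_le_iff)
  ultimately have "arccos 0 < arccos t" by (intro arccos_less_arccos) auto
  then show False using assms by (simp add: vangle_def t_def)
qed

locale plane_triangle = full_simplex K for K :: "point set" +
  assumes three_vertices: "card K = 3"
begin

lemma area_pos: "area K > 0"
  unfolding area_def
  by (intro measure_pos_if_interior_nonempty compact_convex_hull finite_imp_compact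
      finite_vertices interior_convex_hull_nonempty)

lemma grad_on_affine:
  assumes "\<forall>x\<in>convex hull K. v x = b \<bullet> x + c"
  shows "grad_on K v = b"
  unfolding grad_on_def
proof (rule the_equality)
  show "\<exists>c. \<forall>x\<in>convex hull K. v x = b \<bullet> x + c" using assms by blast
next
  fix b' assume "\<exists>c. \<forall>x\<in>convex hull K. v x = b' \<bullet> x + c"
  then obtain c' where "\<forall>x\<in>convex hull K. v x = b' \<bullet> x + c'" by blast
  with assms show "b' = b"
    by (intro affine_functional_eq_on_interior[OF interior_convex_hull_nonempty, of b' c' b c]) auto
qed

lemma nonobtuse_barycentric_grad_inner_nonpos:
  assumes nonobtuse: "\<forall>p\<in>K. \<forall>q\<in>K. \<forall>r\<in>K. p \<noteq> q \<and> p \<noteq> r \<and> q \<noteq> r \<longrightarrow> vangle (q - p) (r - p) \<le> pi / 2"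
    and "p \<in> K" "q \<in> K" "p \<noteq> q"
  shows "barycentric_grad p \<bullet> barycentric_grad q \<le> 0"
proof -
  have "card (K - {p, q}) = 1"
    using assms(2-4) three_vertices by (simp add: card_Diff_subset finite_vertices)
  then obtain r where "r \<in> K" "r \<noteq> p" "r \<noteq> q"
    by (metis Diff_iff card_1_singletonE insertCI)
  have grad: "barycentric_grad s \<bullet> (x - y) = barycentric s x - barycentric s y" if "s \<in> K" for s x y
    using barycentric_affine[OF that, of x] barycentric_affine[OF that, of y] by (simp add: inner_diff_right)
  show ?thesis
  proof (rule dual_basis_inner_nonpos)
    show "barycentric_grad p \<bullet> (p - r) = 1" "barycentric_grad p \<bullet> (q - r) = 0"
      "barycentric_grad q \<bullet> (p - r) = 0" "barycentric_grad q \<bullet> (q - r) = 1"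
      using assms(2-4) \<open>r \<in> K\<close> \<open>r \<noteq> p\<close> \<open>r \<noteq> q\<close> by (simp_all add: grad barycentric_vertex)
    show "(p - r) \<bullet> (q - r) \<ge> 0"
      using nonobtuse assms(2-4) \<open>r \<in> K\<close> \<open>r \<noteq> p\<close> \<open>r \<noteq> q\<close>
      by (intro inner_nonneg_if_vangle_le_pi_half) auto
  qed
qed

end

lemma is_triangle_imp_plane_triangle:
  assumes "is_triangle K"
  shows "plane_triangle K"
proof
  show "finite K" "\<not> affine_dependent K" "card K = 3"
    using assms by (auto simp: is_triangle_def intro: card_ge_0_finite)
  then have "aff_dim K = 2"
    using aff_dim_affine_independent[of K] by simp
  then show "affine hull K = UNIV"
    using aff_dim_eq_full[of K] by simp
qed

section \<open>Positivity of the upwind step\<close>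

lemma upwind_flux_negative_part:
  "(posp m * posp s - negp m * posp t) * (negp s - negp t) \<le> 0"
proof -
  have z: "posp s * negp s = 0" "posp t * negp t = 0"
    by (simp_all add: posp_def negp_def max_def min_def)
  have nn: "posp x \<ge> 0" "negp x \<ge> 0" for x
    by (simp_all add: posp_def negp_def)
  have "(posp m * posp s - negp m * posp t) * (negp s - negp t)
      = posp m * (posp s * negp s) + negp m * (posp t * negp t)
        - (posp m * posp s * negp t + negp m * posp t * negp s)"
    by (simp add: algebra_simps)
  also have "\<dots> = - (posp m * posp s * negp t + negp m * posp t * negp s)"
    unfolding z by simp
  also have "\<dots> \<le> 0"
    by (simp only: neg_le_0_iff_le) (intro add_nonneg_nonneg mult_nonneg_nonneg nn)
  finally show ?thesis .
qed

lemma a_upw_negative_part_nonpos: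
  assumes "\<forall>K\<in>T. finite K"
  shows "a_upw T \<mu> (\<lambda>K. posp (u K)) (\<lambda>K. negp (u K)) \<le> 0"
  unfolding a_upw_def
proof (rule sum_nonpos, clarify)
  fix K L assume "(K, L) \<in> interior_edge_pairs T"
  then have "finite (K \<inter> L)" using assms by (simp add: interior_edge_pairs_def)
  then have "1 / 2 * (edge_length K L / D_edge K L) \<ge> 0"
    by (simp add: edge_length_def D_edge_def diameter_ge_0 finite_imp_bounded)
  from mult_nonneg_nonpos[OF this upwind_flux_negative_part]
  show "1 / 2 * (edge_length K L / D_edge K L) *
      (posp (\<mu> K - \<mu> L) * posp (u K) - negp (\<mu> K - \<mu> L) * posp (u L)) * (negp (u K) - negp (u L)) \<le> 0"
    by (simp add: mult.assoc)
qed

lemma upwind_step_nonneg: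
  assumes "finite T" and triangles: "\<forall>K\<in>T. finite K \<and> area K > 0"
    and "\<Delta>t > 0" and u0: "\<forall>K\<in>T. u0 K \<ge> 0"
    and step: "L2_00 T (\<lambda>K. (u1 K - u0 K) / \<Delta>t) (\<lambda>K. negp (u1 K))
        + a_upw T \<mu> (\<lambda>K. posp (u1 K)) (\<lambda>K. negp (u1 K)) = 0"
  shows "\<forall>K\<in>T. u1 K \<ge> 0"
proof -
  have "area K * ((u1 K - u0 K) / \<Delta>t) * negp (u1 K) \<le> - (area K * (negp (u1 K))\<^sup>2) / \<Delta>t"
    if "K \<in> T" for K
  proof -
    have "u1 K * negp (u1 K) = - (negp (u1 K))\<^sup>2"
      by (simp add: negp_def power2_eq_square min_def)
    then have "(u1 K - u0 K) * negp (u1 K) \<le> - (negp (u1 K))\<^sup>2"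
      using u0 that by (simp add: left_diff_distrib negp_def mult_nonneg_nonpos)
    moreover have "area K \<ge> 0" using that triangles by (simp add: less_imp_le)
    ultimately have "area K * ((u1 K - u0 K) * negp (u1 K)) \<le> area K * - (negp (u1 K))\<^sup>2"
      by (rule mult_left_mono)
    then have "area K * ((u1 K - u0 K) * negp (u1 K)) / \<Delta>t \<le> area K * - (negp (u1 K))\<^sup>2 / \<Delta>t"
      using \<open>\<Delta>t > 0\<close> by (intro divide_right_mono) auto
    then show ?thesis by simp
  qed
  then have "L2_00 T (\<lambda>K. (u1 K - u0 K) / \<Delta>t) (\<lambda>K. negp (u1 K))
      \<le> - (\<Sum>K\<in>T. area K * (negp (u1 K))\<^sup>2) / \<Delta>t"
    unfolding L2_00_def sum_divide_distrib sum_negf[symmetric] by (rule sum_mono)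
  moreover have "L2_00 T (\<lambda>K. (u1 K - u0 K) / \<Delta>t) (\<lambda>K. negp (u1 K)) \<ge> 0"
    using step a_upw_negative_part_nonpos[of T \<mu> u1] triangles by simp
  ultimately have "(\<Sum>K\<in>T. area K * (negp (u1 K))\<^sup>2) / \<Delta>t \<le> 0"
    by linarith
  then have "(\<Sum>K\<in>T. area K * (negp (u1 K))\<^sup>2) \<le> 0"
    using \<open>\<Delta>t > 0\<close> by (simp add: divide_le_0_iff)
  moreover have nonneg: "\<forall>K\<in>T. area K * (negp (u1 K))\<^sup>2 \<ge> 0"
    using triangles by (simp add: less_imp_le)
  then have "0 \<le> (\<Sum>K\<in>T. area K * (negp (u1 K))\<^sup>2)"
    by (simp add: sum_nonneg)
  ultimately have "(\<Sum>K\<in>T. area K * (negp (u1 K))\<^sup>2) = 0"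
    by linarith
  moreover from nonneg have "(\<Sum>K\<in>T. area K * (negp (u1 K))\<^sup>2) = 0
      \<longleftrightarrow> (\<forall>K\<in>T. area K * (negp (u1 K))\<^sup>2 = 0)"
    by (intro sum_nonneg_eq_0_iff[OF \<open>finite T\<close>]) blast
  ultimately have zero: "\<forall>K\<in>T. area K * (negp (u1 K))\<^sup>2 = 0"
    by blast
  show ?thesis
  proof
    fix K assume "K \<in> T"
    with zero triangles have "negp (u1 K) = 0" by fastforce
    then show "u1 K \<ge> 0" by (simp add: negp_def min_def split: if_splits)
  qed
qed

section \<open>Hat functions and the discrete minimum principle\<close>

locale triangulation =
  fixes T :: "point set set" and \<Omega> :: "point set"
  assumes conforming: "conforming_mesh T \<Omega>"
begin

lemma finite_mesh: "finite T"
  using conforming by (simp add: conforming_mesh_def)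

lemma plane_triangle_mesh: "K \<in> T \<Longrightarrow> plane_triangle K"
  using conforming is_triangle_imp_plane_triangle by (simp add: conforming_mesh_def)

lemma closure_domain: "closure \<Omega> = (\<Union>K\<in>T. convex hull K)"
  using conforming by (simp add: conforming_mesh_def)

lemma finite_triangle:
  assumes "K \<in> T"
  shows "finite K"
proof -
  interpret plane_triangle K using plane_triangle_mesh assms .
  show ?thesis by (rule finite_vertices)
qed

lemma finite_mesh_vertices: "finite (\<Union>T)"
  using finite_mesh finite_triangle by (rule finite_Union)

lemma mesh_vertices_nonempty: "\<Union>T \<noteq> {}"
proof -
  obtain x where "x \<in> \<Omega>" using conforming by (auto simp: conforming_mesh_def)
  then obtain K where "K \<in> T" "x \<in> convex hull K"
    using closure_domain closure_subset by blast
  then have "K \<noteq> {}" by auto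
  with \<open>K \<in> T\<close> show ?thesis by blast
qed

lemma barycentric_consistent:
  assumes "K \<in> T" "L \<in> T" "x \<in> convex hull K" "x \<in> convex hull L" "p \<in> L"
  shows "full_simplex.barycentric L p x = (if p \<in> K then full_simplex.barycentric K p x else 0)"
proof (cases "K = L")
  case False
  interpret K: plane_triangle K using plane_triangle_mesh assms(1) .
  interpret L: plane_triangle L using plane_triangle_mesh assms(2) .
  have "x \<in> convex hull (K \<inter> L)"
    using conforming assms(1-4) False unfolding conforming_mesh_def by blast
  then obtain w where w: "sum w (K \<inter> L) = 1" "(\<Sum>q\<in>K \<inter> L. w q *\<^sub>R q) = x"
    using convex_hull_finite[of "K \<inter> L"] K.finite_vertices by auto
  then have "L.barycentric p x = (if p \<in> K \<inter> L then w p else 0)"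
    using L.barycentric_face \<open>p \<in> L\<close> by blast
  moreover have "K.barycentric p x = w p" if "p \<in> K"
    using K.barycentric_face[OF _ w that] \<open>p \<in> L\<close> that by simp
  ultimately show ?thesis using \<open>p \<in> L\<close> by simp
qed (use assms in simp)

(* The choice of K is irrelevant by conformity, see hat_on_triangle. *)
definition hat :: "point \<Rightarrow> point \<Rightarrow> real" where
  "hat p x = (if \<exists>K\<in>T. p \<in> K \<and> x \<in> convex hull K
     then full_simplex.barycentric (SOME K. K \<in> T \<and> p \<in> K \<and> x \<in> convex hull K) p x else 0)"

lemma hat_on_triangle:
  assumes "K \<in> T" "x \<in> convex hull K"
  shows "hat p x = (if p \<in> K then full_simplex.barycentric K p x else 0)"
proof (cases "\<exists>L\<in>T. p \<in> L \<and> x \<in> convex hull L")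
  case True
  define L where "L = (SOME L. L \<in> T \<and> p \<in> L \<and> x \<in> convex hull L)"
  have "L \<in> T \<and> p \<in> L \<and> x \<in> convex hull L"
    unfolding L_def by (rule someI_ex) (use True in blast)
  then show ?thesis
    using barycentric_consistent[OF assms(1) _ assms(2)] True by (simp add: hat_def L_def[symmetric])
next
  case False
  with assms show ?thesis by (auto simp: hat_def)
qed

lemma hat_P1cont: "P1cont T (hat p)"
  unfolding P1cont_def
proof
  fix K assume "K \<in> T"
  interpret K: plane_triangle K using plane_triangle_mesh \<open>K \<in> T\<close> .
  have "hat p x = (if p \<in> K then K.barycentric_grad p else 0) \<bullet> x
      + (if p \<in> K then K.barycentric p 0 else 0)" if "x \<in> convex hull K" for x
    using hat_on_triangle[OF \<open>K \<in> T\<close> that] K.barycentric_affine[of p x] by simp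
  then show "\<exists>a c. \<forall>x\<in>convex hull K. hat p x = a \<bullet> x + c" by blast
qed

lemma grad_on_hat:
  assumes "K \<in> T"
  shows "grad_on K (hat p) = (if p \<in> K then full_simplex.barycentric_grad K p else 0)"
proof -
  interpret K: plane_triangle K using plane_triangle_mesh assms .
  have "hat p x = (if p \<in> K then K.barycentric_grad p else 0) \<bullet> x
      + (if p \<in> K then K.barycentric p 0 else 0)" if "x \<in> convex hull K" for x
    using hat_on_triangle[OF assms that] K.barycentric_affine[of p x] by simp
  then show ?thesis by (intro K.grad_on_affine) blast
qed

lemma hat_vertex:
  assumes "K \<in> T" "q \<in> K"
  shows "hat p q = (if p = q then 1 else 0)"
proof -
  interpret K: plane_triangle K using plane_triangle_mesh assms(1) .
  show ?thesis
    using hat_on_triangle[OF assms(1) hull_inc[OF assms(2)]] K.barycentric_vertex assms(2) by auto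
qed

lemma hat_nonneg: "hat p x \<ge> 0"
proof (cases "\<exists>K\<in>T. x \<in> convex hull K")
  case True
  then obtain K where "K \<in> T" "x \<in> convex hull K" by blast
  interpret K: plane_triangle K using plane_triangle_mesh \<open>K \<in> T\<close> .
  show ?thesis
    using hat_on_triangle[OF \<open>K \<in> T\<close> \<open>x \<in> convex hull K\<close>] K.barycentric_nonneg[OF _ \<open>x \<in> convex hull K\<close>]
    by simp
next
  case False
  then show ?thesis by (auto simp: hat_def)
qed

definition lumped_mass :: "point \<Rightarrow> real" where
  "lumped_mass p = (\<Sum>K\<in>{K\<in>T. p \<in> K}. area K / 3)"

lemma lumped_mass_pos:
  assumes "p \<in> \<Union>T"
  shows "lumped_mass p > 0"
proof -
  obtain K where "K \<in> T" "p \<in> K" using assms by blast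
  then show ?thesis
    unfolding lumped_mass_def using finite_mesh plane_triangle_mesh plane_triangle.area_pos
    by (intro sum_pos2[of _ K]) (auto intro: less_imp_le)
qed

lemma lumped_hat: "lumped T f (hat p) = lumped_mass p * f p"
proof -
  have "(\<Sum>q\<in>K. f q * hat p q) = (if p \<in> K then f p else 0)" if "K \<in> T" for K
  proof -
    interpret K: plane_triangle K using plane_triangle_mesh \<open>K \<in> T\<close> .
    have "(\<Sum>q\<in>K. f q * hat p q) = (\<Sum>q\<in>K. if p = q then f p else 0)"
      using hat_vertex[OF that] by (intro sum.cong) auto
    also have "\<dots> = (if p \<in> K then f p else 0)"
      by (simp add: sum.delta' K.finite_vertices)
    finally show ?thesis .
  qed
  then have "lumped T f (hat p) = (\<Sum>K\<in>T. if p \<in> K then area K / 3 * f p else 0)"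
    unfolding lumped_def by (intro sum.cong) auto
  also have "\<dots> = (\<Sum>K\<in>{K\<in>T. p \<in> K}. area K / 3 * f p)"
    by (rule sum.inter_filter[OF finite_mesh, symmetric])
  also have "\<dots> = lumped_mass p * f p"
    by (simp add: lumped_mass_def sum_distrib_right)
  finally show ?thesis .
qed

lemma stiff_hat_nonpos_at_min:
  assumes "H2 T" "P1cont T v" and min: "\<forall>q\<in>\<Union>T. v p \<le> v q"
  shows "stiff T v (hat p) \<le> 0"
  unfolding stiff_def
proof (rule sum_nonpos)
  fix K assume "K \<in> T"
  interpret K: plane_triangle K using plane_triangle_mesh \<open>K \<in> T\<close> .
  obtain b c where v: "\<forall>x\<in>convex hull K. v x = b \<bullet> x + c"
    using \<open>P1cont T v\<close> \<open>K \<in> T\<close> unfolding P1cont_def by blast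
  have "b \<bullet> K.barycentric_grad p \<le> 0" if "p \<in> K"
  proof (rule K.inner_barycentric_grad_nonpos_at_min[OF that])
    show "\<forall>q\<in>K. b \<bullet> p \<le> b \<bullet> q"
    proof
      fix q assume "q \<in> K"
      with min \<open>K \<in> T\<close> have "v p \<le> v q" by blast
      with v \<open>q \<in> K\<close> \<open>p \<in> K\<close> show "b \<bullet> p \<le> b \<bullet> q" by (simp add: hull_inc)
    qed
    have "\<forall>p\<in>K. \<forall>q\<in>K. \<forall>r\<in>K. p \<noteq> q \<and> p \<noteq> r \<and> q \<noteq> r \<longrightarrow> vangle (q - p) (r - p) \<le> pi / 2"
      using \<open>H2 T\<close> \<open>K \<in> T\<close> unfolding H2_def by blast
    with \<open>p \<in> K\<close> show "\<forall>q\<in>K. q \<noteq> p \<longrightarrow> K.barycentric_grad q \<bullet> K.barycentric_grad p \<le> 0"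
      using K.nonobtuse_barycentric_grad_inner_nonpos by blast
  qed
  then show "area K * (grad_on K v \<bullet> grad_on K (hat p)) \<le> 0"
    using K.grad_on_affine[OF v] grad_on_hat[OF \<open>K \<in> T\<close>] K.area_pos
    by (simp add: mult_nonneg_nonpos)
qed

lemma L2_01_hat_nonneg:
  assumes "\<forall>K\<in>T. u K \<ge> 0"
  shows "L2_01 T u (hat p) \<ge> 0"
  unfolding L2_01_def
proof (rule sum_nonneg)
  fix K assume "K \<in> T"
  have "integral (convex hull K) (hat p) \<ge> 0"
  proof (cases "hat p integrable_on convex hull K")
    case True
    then show ?thesis using hat_nonneg by (simp add: integral_nonneg)
  next
    case False
    then show ?thesis by (simp add: not_integrable_integral)
  qed
  with assms \<open>K \<in> T\<close> show "u K * integral (convex hull K) (hat p) \<ge> 0" by simp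
qed

lemma P1cont_nonneg_at_vertices:
  assumes "P1cont T v" and nonneg: "\<forall>x\<in>\<Omega>. v x \<ge> 0"
  shows "\<forall>p\<in>\<Union>T. v p \<ge> 0"
proof
  fix p assume "p \<in> \<Union>T"
  then obtain K where "K \<in> T" "p \<in> K" by blast
  interpret K: plane_triangle K using plane_triangle_mesh \<open>K \<in> T\<close> .
  obtain a c where v: "\<forall>x\<in>convex hull K. v x = a \<bullet> x + c"
    using \<open>P1cont T v\<close> \<open>K \<in> T\<close> unfolding P1cont_def by blast
  have "\<forall>x\<in>convex hull K. a \<bullet> x + c \<ge> 0"
  proof (rule affine_nonneg_on_convex_body)
    show "convex (convex hull K)" "closed (convex hull K)" "interior (convex hull K) \<noteq> {}"
      by (simp_all add: compact_imp_closed compact_convex_hull finite_imp_compact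
          K.finite_vertices K.interior_convex_hull_nonempty)
    show "convex hull K \<subseteq> closure \<Omega>" using closure_domain \<open>K \<in> T\<close> by blast
    show "\<forall>x\<in>convex hull K \<inter> \<Omega>. a \<bullet> x + c \<ge> 0" using v nonneg by auto
  qed
  with v \<open>p \<in> K\<close> show "v p \<ge> 0" by (simp add: hull_inc)
qed

lemma P1cont_nonneg_on_closure:
  assumes "P1cont T v" and nonneg: "\<forall>p\<in>\<Union>T. v p \<ge> 0"
  shows "\<forall>x\<in>closure \<Omega>. v x \<ge> 0"
proof
  fix x assume "x \<in> closure \<Omega>"
  then obtain K where "K \<in> T" "x \<in> convex hull K" using closure_domain by blast
  interpret K: plane_triangle K using plane_triangle_mesh \<open>K \<in> T\<close> .
  obtain a c where v: "\<forall>x\<in>convex hull K. v x = a \<bullet> x + c"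
    using \<open>P1cont T v\<close> \<open>K \<in> T\<close> unfolding P1cont_def by blast
  have "v x = (\<Sum>q\<in>K. K.barycentric q x * v q)"
    by (rule K.affine_interpolation[OF v \<open>x \<in> convex hull K\<close>])
  also have "\<dots> \<ge> 0"
    using nonneg \<open>K \<in> T\<close> K.barycentric_nonneg[OF _ \<open>x \<in> convex hull K\<close>]
    by (intro sum_nonneg mult_nonneg_nonneg) auto
  finally show "v x \<ge> 0" .
qed

lemma discrete_minimum_principle:
  assumes "H2 T" and coeffs: "\<tau> \<ge> 0" "\<Delta>t > 0" "k2 \<ge> 0" "k3 > 0" "k4 \<ge> 0"
    and u0: "\<forall>K\<in>T. u0 K \<ge> 0" and v0: "\<tau> > 0 \<longrightarrow> (\<forall>p\<in>\<Union>T. v0 p \<ge> 0)"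
    and "P1cont T v1"
    and step: "\<forall>vb. P1cont T vb \<longrightarrow>
        \<tau> * lumped T (\<lambda>x. (v1 x - v0 x) / \<Delta>t) vb + k2 * stiff T v1 vb
        + k3 * lumped T v1 vb - k4 * L2_01 T u0 vb = 0"
  shows "\<forall>p\<in>\<Union>T. v1 p \<ge> 0"
proof -
  obtain p where "p \<in> \<Union>T" and min: "\<forall>q\<in>\<Union>T. v1 p \<le> v1 q"
    using ex_is_arg_min_if_finite[OF finite_mesh_vertices mesh_vertices_nonempty, of v1]
    by (auto simp: is_arg_min_linorder)
  have "v1 p \<ge> 0"
  proof (rule ccontr)
    assume "\<not> v1 p \<ge> 0"
    have "\<tau> * (lumped_mass p * ((v1 p - v0 p) / \<Delta>t)) + k2 * stiff T v1 (hat p)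
        + k3 * (lumped_mass p * v1 p) - k4 * L2_01 T u0 (hat p) = 0"
      using step[rule_format, OF hat_P1cont[of p]] by (simp add: lumped_hat)
    moreover have "\<tau> * (lumped_mass p * ((v1 p - v0 p) / \<Delta>t)) \<le> 0"
    proof (cases "\<tau> > 0")
      case True
      with v0 \<open>p \<in> \<Union>T\<close> have "v0 p \<ge> 0" by blast
      with \<open>\<not> v1 p \<ge> 0\<close> have "v1 p - v0 p < 0" by linarith
      with True lumped_mass_pos[OF \<open>p \<in> \<Union>T\<close>] \<open>\<Delta>t > 0\<close> show ?thesis
        by (simp add: mult_nonneg_nonpos mult_pos_neg divide_neg_pos less_imp_le)
    qed (use \<open>\<tau> \<ge> 0\<close> in simp)
    moreover have "k2 * stiff T v1 (hat p) \<le> 0"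
      using stiff_hat_nonpos_at_min[OF \<open>H2 T\<close> \<open>P1cont T v1\<close> min] \<open>k2 \<ge> 0\<close>
      by (simp add: mult_nonneg_nonpos)
    moreover have "k4 * L2_01 T u0 (hat p) \<ge> 0"
      using L2_01_hat_nonneg[OF u0] \<open>k4 \<ge> 0\<close> by simp
    moreover have "k3 * (lumped_mass p * v1 p) < 0"
      using lumped_mass_pos[OF \<open>p \<in> \<Union>T\<close>] \<open>k3 > 0\<close> \<open>\<not> v1 p \<ge> 0\<close>
      by (simp add: mult_pos_neg)
    ultimately show False by linarith
  qed
  with min show ?thesis by force
qed

end

theorem mainTheorem2:
  fixes T :: "point set set" and \<Omega> :: "point set"
    and k0 k1 k2 k3 k4 \<tau> \<Delta>t \<epsilon> :: real
    and u0 u1 \<mu>1 :: "point set \<Rightarrow> real"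
    and v0 v1 :: "point \<Rightarrow> real"
  assumes mesh: "conforming_mesh T \<Omega>"
    and H1: "H1 T" and H2: "H2 T"
    and k_pos: "k0 > 0" "k1 > 0" "k2 > 0" "k3 > 0" "k4 > 0"
    and tau: "\<tau> = 0 \<or> \<tau> = 1"
    and dt: "\<Delta>t > 0" and eps: "\<epsilon> > 0"
    and u0_nonneg: "\<forall>K\<in>T. u0 K \<ge> 0"
    and v0_P1: "P1cont T v0"
    and v0_nonneg: "\<tau> > 0 \<longrightarrow> (\<forall>x\<in>\<Omega>. v0 x \<ge> 0)"
    and v1_P1: "P1cont T v1"
    and step1: "\<forall>vb. P1cont T vb \<longrightarrow>
        \<tau> * lumped T (\<lambda>x. (v1 x - v0 x) / \<Delta>t) vb + k2 * stiff T v1 vb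
        + k3 * lumped T v1 vb - k4 * L2_01 T u0 vb = 0"
    and u1_pos: "\<forall>K\<in>T. u1 K + \<epsilon> > 0"
    and step2u: "\<forall>ub. L2_00 T (\<lambda>K. (u1 K - u0 K) / \<Delta>t) ub
        + a_upw T \<mu>1 (\<lambda>K. posp (u1 K)) ub = 0"
    and step2mu: "\<forall>mb. L2_00 T \<mu>1 mb - k0 * L2_00 T (\<lambda>K. ln (u1 K + \<epsilon>)) mb
        + k1 * L2_01 T mb v1 = 0"
  shows "(\<forall>K\<in>T. u1 K \<ge> 0) \<and> (\<forall>x\<in>\<Omega>. v1 x \<ge> 0)"
proof -
  interpret triangulation T \<Omega> by (rule triangulation.intro) (rule mesh)
  have triangles: "\<forall>K\<in>T. finite K \<and> area K > 0"
    by (simp add: finite_triangle plane_triangle.area_pos[OF plane_triangle_mesh])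
  have "\<forall>K\<in>T. u1 K \<ge> 0"
    using finite_mesh triangles dt u0_nonneg step2u[rule_format, of "\<lambda>K. negp (u1 K)"]
    by (rule upwind_step_nonneg)
  moreover have "\<forall>p\<in>\<Union>T. v1 p \<ge> 0"
  proof (rule discrete_minimum_principle[OF H2 _ dt _ k_pos(4) _ u0_nonneg _ v1_P1 step1])
    show "\<tau> \<ge> 0" "k2 \<ge> 0" "k4 \<ge> 0" using tau k_pos by auto
    show "\<tau> > 0 \<longrightarrow> (\<forall>p\<in>\<Union>T. v0 p \<ge> 0)"
      using v0_nonneg P1cont_nonneg_at_vertices[OF v0_P1] by blast
  qed
  then have "\<forall>x\<in>closure \<Omega>. v1 x \<ge> 0"
    by (rule P1cont_nonneg_on_closure[OF v1_P1])
  ultimately show ?thesis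
    using closure_subset by blast
qed

end
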